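(* Let $R$ be a ring with multiplicative identity $1$, and let $(A, C, U)$ be a Frobenius template in $R$ such that $1 \in U$. If $(\alpha_1, \dots, \alpha_n)$ is a list in $A$ such that $\mathrm{Frob}(\alpha_1, \dots, \alpha_n) \neq \emptyset$, then $(\alpha_1, \dots, \alpha_n)$ spans unity in $R$, i.e. there exist $\lambda_1, \dots, \lambda_n \in R$ with $1 = \lambda_1\alpha_1 + \dots + \lambda_n\alpha_n$.
   Context: An additive monoid in a ring $R$ is a subset of $R$ closed under addition and containing $0$. A Frobenius template in $R$ is a triple $(A, C, U)$ such that $A$ is a nonempty subset of $R$, $C$ and $U$ are additive monoids in $R$, and for every list (finite sequence) $(\alpha_1, \dots, \alpha_n)$ of elements of $A$, the set $MN(\alpha_1, \dots, \alpha_n) = \{\sum_{i=1}^n \lambda_i \alpha_i : \lambda_1, \dots, \lambda_n \in C\}$ is a subset of $U$. The Frobenius set of such a list is $\mathrm{Frob}(\alpha_1, \dots, \alpha_n) = \{w \in R : w + U \subseteq MN(\alpha_1, \dots, \alpha_n)\}$, where $w + U = \{w + u : u \in U\}$. *)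

theory Defs
  imports Main
begin

definition additive_monoid :: "'a::ring_1 set \<Rightarrow> bool" where
  "additive_monoid M \<longleftrightarrow> 0 \<in> M \<and> (\<forall>x\<in>M. \<forall>y\<in>M. x + y \<in> M)"

definition MN :: "'a::ring_1 set \<Rightarrow> 'a list \<Rightarrow> 'a set" where
  "MN C as = {(\<Sum>i<length as. l i * as ! i) | l. \<forall>i<length as. l i \<in> C}"

definition frobenius_template :: "'a::ring_1 set \<Rightarrow> 'a set \<Rightarrow> 'a set \<Rightarrow> bool" where
  "frobenius_template A C U \<longleftrightarrow> A \<noteq> {} \<and> additive_monoid C \<and> additive_monoid U \<and>
     (\<forall>as. set as \<subseteq> A \<longrightarrow> MN C as \<subseteq> U)"

definition Frob :: "'a::ring_1 set \<Rightarrow> 'a set \<Rightarrow> 'a list \<Rightarrow> 'a set" where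
  "Frob C U as = {w. {w + u | u. u \<in> U} \<subseteq> MN C as}"

end

theory Submission
  imports Defs
begin

text \<open>If \<open>w\<close> lies in the Frobenius set, then both \<open>w + 0\<close> and \<open>w + 1\<close> are \<open>C\<close>-combinations
  of the list, so their difference \<open>1\<close> is an \<open>R\<close>-combination of it.\<close>

lemma MN_mono: "C \<subseteq> D \<Longrightarrow> MN C as \<subseteq> MN D as"
  unfolding MN_def by blast

lemma MN_UNIV_diff:
  assumes "x \<in> MN UNIV as" and "y \<in> MN UNIV as"
  shows "x - y \<in> MN UNIV as"
proof -
  obtain lx ly where
    x: "x = (\<Sum>i<length as. lx i * as ! i)" and y: "y = (\<Sum>i<length as. ly i * as ! i)"
    using assms unfolding MN_def by blast
  have "x - y = (\<Sum>i<length as. (lx i - ly i) * as ! i)"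
    by (simp add: x y sum_subtractf left_diff_distrib)
  then show ?thesis
    unfolding MN_def by auto
qed

lemma Frob_add_mem_MN: "w \<in> Frob C U as \<Longrightarrow> u \<in> U \<Longrightarrow> w + u \<in> MN C as"
  unfolding Frob_def by blast

lemma mem_MN_UNIV_if_Frob_nonempty:
  assumes "Frob C U as \<noteq> {}" and "0 \<in> U" and "u \<in> U"
  shows "u \<in> MN UNIV as"
proof -
  obtain w where w: "w \<in> Frob C U as"
    using assms(1) by blast
  have "w + u \<in> MN UNIV as" and "w + 0 \<in> MN UNIV as"
    using Frob_add_mem_MN[OF w] assms(2,3) MN_mono[of C UNIV as] by blast+
  from MN_UNIV_diff[OF this] show ?thesis
    by simp
qed

theorem proposition2p1:
  fixes A C U :: "'a::ring_1 set" and as :: "'a list"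
  assumes "frobenius_template A C U"
    and "1 \<in> U"
    and "set as \<subseteq> A"
    and "Frob C U as \<noteq> {}"
  shows "\<exists>l :: nat \<Rightarrow> 'a. 1 = (\<Sum>i<length as. l i * as ! i)"
proof -
  have "0 \<in> U"
    using assms(1) unfolding frobenius_template_def additive_monoid_def by blast
  with assms(2,4) have "1 \<in> MN UNIV as"
    by (intro mem_MN_UNIV_if_Frob_nonempty)
  then show ?thesis
    unfolding MN_def by blast
qed

end
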